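(* Consider the path $\hat q(t)=(\hat q_1(t),\hat q_2(t),\hat q_3(t))$, $t\in[0,1]$, in $\mathbb{R}^2$ with $\hat q_i(t)=(\hat q_{ix}(t),0)$, where \[\hat q_{1x}(t)=\begin{cases}-\tfrac{9}{10}+t^{2/3}, & 0\le t\le\tfrac18,\\ \tfrac{26}{35}t-\tfrac{26}{35}, & \tfrac18\le t\le1,\end{cases}\qquad \hat q_{2x}(t)=\begin{cases}-\tfrac{9}{10}-t^{2/3}, & 0\le t\le\tfrac18,\\ -\tfrac{26}{35}t-\tfrac{37}{35}, & \tfrac18\le t\le1,\end{cases}\] and $\hat q_{3x}(t)\equiv\tfrac95$. Then $\hat q\in H^1([0,1],\chi)$ and \[\mathcal{A}(\hat q)=\int_0^1\Big(\tfrac12\sum_{i=1}^3|\dot{\hat q}_i|^2+\sum_{1\le i<j\le3}\frac{1}{|\hat q_i-\hat q_j|}\Big)dt<3.5383.\]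
   Context: $\chi=\{(q_1,q_2,q_3)\in(\mathbb{R}^2)^3: q_1+q_2+q_3=0\}$ (equal unit masses). The action $\mathcal{A}$ is that of the planar three-body problem with masses $m_1=m_2=m_3=1$. *)

theory Defs
  imports "HOL-Analysis.Analysis"
begin

definition chi :: "(real^2^3) set" where
  "chi = {x. x$1 + x$2 + x$3 = 0}"

text \<open>Sobolev space H^1([a,b],S): absolutely continuous paths with square-integrable
  derivative, i.e. f t = f a + integral of g over [a,t] for some g in L^2 (hence L^1)
  on [a,b], taking values in S.\<close>

definition H1_on :: "real \<Rightarrow> real \<Rightarrow> ('a::euclidean_space) set \<Rightarrow> (real \<Rightarrow> 'a) \<Rightarrow> bool" where
  "H1_on a b S f \<longleftrightarrow>
     (\<forall>t\<in>{a..b}. f t \<in> S) \<and>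
     (\<exists>g. set_integrable lborel {a..b} g \<and>
          set_integrable lborel {a..b} (\<lambda>t. (norm (g t))\<^sup>2) \<and>
          (\<forall>t\<in>{a..b}. f t = f a + (LINT s:{a..t}|lborel. g s)))"

definition lagrangian :: "(real \<Rightarrow> real^2^3) \<Rightarrow> real \<Rightarrow> real" where
  "lagrangian q t =
     (1/2) * (\<Sum>i\<in>UNIV. (norm (vector_derivative q (at t) $ i))\<^sup>2)
     + 1 / dist (q t $ 1) (q t $ 2) + 1 / dist (q t $ 1) (q t $ 3)
     + 1 / dist (q t $ 2) (q t $ 3)"

definition action :: "(real \<Rightarrow> real^2^3) \<Rightarrow> real" where
  "action q = (LINT t:{0..1}|lborel. lagrangian q t)"

definition q1x :: "real \<Rightarrow> real" where
  "q1x t = (if t \<le> 1/8 then - 9/10 + t powr (2/3) else 26/35 * t - 26/35)"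

definition q2x :: "real \<Rightarrow> real" where
  "q2x t = (if t \<le> 1/8 then - 9/10 - t powr (2/3) else - 26/35 * t - 37/35)"

definition q3x :: "real \<Rightarrow> real" where
  "q3x t = 9/5"

definition qhat :: "real \<Rightarrow> real^2^3" where
  "qhat t = vector [vector [q1x t, 0], vector [q2x t, 0], vector [q3x t, 0]]"

end

theory Submission
  imports Defs
begin

text \<open>Bodies 1 and 2 move on the x-axis symmetrically about -9/10 while body 3 rests, so
  qhat t = qhat 0 + s t \<cdot> e with e = (e1, -e1, 0); in particular qhat stays in chi, and
  the antiderivative of s' gives the H^1 representation. Off the corner t = 1/8 the Lagrangian
  equals s'^2 plus the three inverse distances. On [0,1/8] its singular part 17/18 t^(-2/3)
  is integrable, and the two remaining inverse distances 1/(27/10 \<mp> t^(2/3)) are bounded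
  by their chord in t^(4/3). On [1/8,1] the Lagrangian is rational with a logarithmic
  primitive, and the logarithms are bounded above by partial sums of the exponential series.\<close>

lemma set_integrable_lborel_if_nonneg_integrable_on:
  fixes f :: "'a::euclidean_space \<Rightarrow> real"
  assumes "f integrable_on S" "\<And>x. x \<in> S \<Longrightarrow> 0 \<le> f x"
    and "f \<in> borel_measurable borel" "S \<in> sets borel"
  shows "set_integrable lborel S f" "(LINT x:S|lborel. f x) = integral S f"
proof -
  have "integrable lebesgue (\<lambda>x. indicator S x *\<^sub>R f x)"
    using nonnegative_absolutely_integrable_1[OF assms(1,2)]
    by (simp add: absolutely_integrable_on_def set_integrable_def)
  moreover have "(\<lambda>x. indicator S x *\<^sub>R f x) \<in> borel_measurable lborel"
    using assms(3,4) by measurable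
  ultimately show si: "set_integrable lborel S f"
    unfolding set_integrable_def using integrable_completion by blast
  show "(LINT x:S|lborel. f x) = integral S f"
    by (rule set_borel_integral_eq_integral(2)[OF si])
qed

lemma ln_le_if_le_exp_partial_sum:
  fixes r y :: real
  assumes "0 < r" "0 \<le> y" "r \<le> (\<Sum>n<N. y^n / fact n)"
  shows "ln r \<le> y"
proof -
  have "(\<lambda>n. y^n / fact n) sums exp y"
    using exp_converges[of y] by (simp add: divide_inverse mult.commute)
  moreover from this have "(\<Sum>n<N. y^n / fact n) \<le> suminf (\<lambda>n. y^n / fact n)"
    using assms(2) by (intro sum_le_suminf) (auto simp: sums_iff)
  ultimately have "r \<le> exp y"
    using assms(3) sums_unique by fastforce
  then show ?thesis
    using assms(1) by (metis ln_exp ln_mono)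
qed

lemma inverse_add_inverse_le_chord:
  fixes a b u :: real
  assumes "0 \<le> u" "u \<le> b" "b < a"
  shows "1 / (a - u) + 1 / (a + u) \<le> 2 / a + 2 * u^2 / (a * (a^2 - b^2))"
proof -
  define Db Du where "Db = a^2 - b^2" and "Du = a^2 - u^2"
  have "u^2 \<le> b^2" "b^2 < a^2" using assms by (auto intro: power_mono power_strict_mono)
  then have pos: "0 < a" "0 < Db" "0 < Du" unfolding Db_def Du_def using assms by linarith+
  have sum_eq: "1 / (a - u) + 1 / (a + u) = 2 * a / Du"
    using pos assms by (simp add: Du_def field_simps power2_eq_square)
  have "2 / a + 2 * u^2 / (a * Db) - 2 * a / Du = 2 * (Db * Du + u^2 * Du - a^2 * Db) / (a * Db * Du)"
    using pos by (simp add: field_simps power2_eq_square)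
  also have "Db * Du + u^2 * Du - a^2 * Db = u^2 * (b^2 - u^2)"
    by (simp add: Db_def Du_def algebra_simps power2_eq_square)
  finally have "2 / a + 2 * u^2 / (a * Db) - 2 * a / Du = 2 * (u^2 * (b^2 - u^2)) / (a * Db * Du)" .
  moreover have "0 \<le> 2 * (u^2 * (b^2 - u^2)) / (a * Db * Du)"
    using pos \<open>u^2 \<le> b^2\<close> by simp
  ultimately show ?thesis
    unfolding sum_eq Db_def by linarith
qed

lemma set_integral_scaleR_left_if_set_integrable:
  fixes f :: "'a \<Rightarrow> real"
  assumes "set_integrable M A f"
  shows "(LINT t:A|M. f t *\<^sub>R c) = (LINT t:A|M. f t) *\<^sub>R c"
  using integral_scaleR_left[OF assms[unfolded set_integrable_def], of c]
  unfolding set_lebesgue_integral_def by simp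

lemma one_eighth_powr:
  "(1/8::real) powr (1/3) = 1/2" "(1/8::real) powr (2/3) = 1/4" "(1/8::real) powr (7/3) = 1/128"
proof -
  have e: "(1/8::real) = (1/2) powr 3" by (simp add: powr_realpow power_divide)
  show "(1/8::real) powr (1/3) = 1/2" by (simp only: e powr_powr) simp
  show "(1/8::real) powr (2/3) = 1/4" by (simp only: e powr_powr) (simp add: powr_numeral power_divide)
  show "(1/8::real) powr (7/3) = 1/128" by (simp only: e powr_powr) (simp add: powr_numeral power_divide)
qed

lemma norm_vector2: "norm (vector [a, b] :: real^2) = sqrt (a^2 + b^2)"
  unfolding norm_vec_def L2_set_def by (simp add: sum_2)

lemma dist_vector2_axis: "dist (vector [a, 0] :: real^2) (vector [b, 0]) = \<bar>a - b\<bar>"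
proof -
  have "(vector [a, 0] :: real^2) - vector [b, 0] = vector [a - b, 0]"
    by (simp add: vec_eq_iff forall_2)
  then show ?thesis by (simp add: dist_norm norm_vector2)
qed

definition qhat_dir :: "real^2^3" where
  "qhat_dir = vector [vector [1, 0], vector [-1, 0], vector [0, 0]]"

definition qhat_shift :: "real \<Rightarrow> real" where
  "qhat_shift t = q1x t + 9/10"

definition qhat_speed :: "real \<Rightarrow> real" where
  "qhat_speed t = (if t \<le> 1/8 then 2/3 * t powr (-1/3) else 26/35)"

definition qhat_lagr :: "real \<Rightarrow> real" where
  "qhat_lagr t = (qhat_speed t)^2
     + 1 / \<bar>q1x t - q2x t\<bar> + 1 / \<bar>q1x t - q3x t\<bar> + 1 / \<bar>q2x t - q3x t\<bar>"

lemma q2x_eq: "q2x t = - 9/5 - q1x t"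
  unfolding q1x_def q2x_def by auto

lemma qhat_eq_shift: "qhat t = qhat 0 + qhat_shift t *\<^sub>R qhat_dir"
  unfolding qhat_def qhat_dir_def qhat_shift_def
  by (simp add: vec_eq_iff forall_3 forall_2 q2x_eq q3x_def) (simp add: q1x_def)

lemma qhat_in_chi: "qhat t \<in> chi"
  unfolding chi_def qhat_def by (simp add: vec_eq_iff forall_2 q2x_eq q3x_def)

lemma continuous_on_qhat_shift: "continuous_on {0..1} qhat_shift"
proof -
  have "continuous_on {0..1} q1x"
    unfolding q1x_def[abs_def]
    by (rule continuous_on_cases_1)
       (auto intro!: continuous_intros continuous_on_powr' simp: one_eighth_powr)
  then show ?thesis
    unfolding qhat_shift_def[abs_def] by (intro continuous_intros)
qed

lemma qhat_shift_has_derivative: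
  assumes "0 < t" "t \<noteq> 1/8"
  shows "(qhat_shift has_real_derivative qhat_speed t) (at t)"
proof (cases "t < 1/8")
  case True
  have "((\<lambda>x. x powr (2/3) + (-9/10 + 9/10)) has_real_derivative qhat_speed t) (at t)"
    using True assms(1) by (auto intro!: derivative_eq_intros simp: qhat_speed_def)
  then show ?thesis
    by (rule has_field_derivative_transform_within_open[where S="{..<1/8}"])
       (use True in \<open>auto simp: qhat_shift_def q1x_def\<close>)
next
  case False
  with assms have t: "t > 1/8" by auto
  have "((\<lambda>x. 26/35 * x - 26/35 + 9/10) has_real_derivative qhat_speed t) (at t)"
    using t by (auto intro!: derivative_eq_intros simp: qhat_speed_def)
  then show ?thesis
    by (rule has_field_derivative_transform_within_open[where S="{1/8<..}"])
       (use t in \<open>auto simp: qhat_shift_def q1x_def\<close>)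
qed

lemma qhat_speed_has_integral:
  assumes "0 \<le> t" "t \<le> 1"
  shows "(qhat_speed has_integral qhat_shift t) {0..t}"
proof -
  have "(qhat_speed has_integral qhat_shift t - qhat_shift 0) {0..t}"
  proof (rule fundamental_theorem_of_calculus_interior_strong[where S="{1/8}"])
    show "continuous_on {0..t} qhat_shift"
      using continuous_on_subset[OF continuous_on_qhat_shift] assms by auto
    show "(qhat_shift has_vector_derivative qhat_speed x) (at x)" if "x \<in> {0<..<t} - {1/8}" for x
      using qhat_shift_has_derivative[of x] that
      by (auto simp: has_real_derivative_iff_has_vector_derivative)
  qed (use assms in auto)
  then show ?thesis by (simp add: qhat_shift_def q1x_def)
qed

lemma vector_derivative_qhat:
  assumes "0 < t" "t \<noteq> 1/8"
  shows "vector_derivative qhat (at t) = qhat_speed t *\<^sub>R qhat_dir"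
proof -
  have "((\<lambda>t. qhat 0 + qhat_shift t *\<^sub>R qhat_dir) has_vector_derivative qhat_speed t *\<^sub>R qhat_dir) (at t)"
    using qhat_shift_has_derivative[OF assms]
    by (auto intro!: derivative_eq_intros simp: has_real_derivative_iff_has_vector_derivative)
  then have "(qhat has_vector_derivative qhat_speed t *\<^sub>R qhat_dir) (at t)"
    by (subst qhat_eq_shift[abs_def])
  then show ?thesis by (rule vector_derivative_at)
qed

lemma lagrangian_qhat:
  assumes "0 < t" "t \<noteq> 1/8"
  shows "lagrangian qhat t = qhat_lagr t"
  unfolding lagrangian_def vector_derivative_qhat[OF assms] qhat_lagr_def
  by (simp add: sum_3 qhat_dir_def norm_vector2 qhat_def dist_vector2_axis)

lemma qhat_lagr_nonneg: "0 \<le> qhat_lagr t"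
  unfolding qhat_lagr_def by simp

lemma qhat_lagr_measurable: "qhat_lagr \<in> borel_measurable borel"
  unfolding qhat_lagr_def qhat_speed_def q1x_def q2x_def q3x_def by measurable

lemma qhat_lagr_le_initial:
  assumes "0 \<le> t" "t \<le> 1/8"
  shows "qhat_lagr t \<le> 17/18 * t powr (-2/3) + 20/27 + 8000/78057 * t powr (4/3)"
proof -
  define u where "u = t powr (2/3)"
  have "u \<le> (1/8) powr (2/3)"
    unfolding u_def using assms by (intro powr_mono2) auto
  then have u: "0 \<le> u" "u \<le> 1/4"
    by (auto simp: u_def one_eighth_powr)
  have q: "q1x t = -9/10 + u" "q2x t = -9/10 - u"
    using assms by (simp_all add: q1x_def q2x_def u_def)
  have "(t powr (-1/3))^2 = t powr (-2/3)"
    by (simp add: power2_eq_square powr_add[symmetric])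
  then have "(qhat_speed t)^2 = 4/9 * t powr (-2/3)"
    using assms by (simp add: qhat_speed_def power_mult_distrib power_divide)
  moreover have "1 / \<bar>q1x t - q2x t\<bar> = 1/2 * t powr (-2/3)"
    using assms by (simp add: q1x_def q2x_def powr_minus_divide)
  moreover have "\<bar>q1x t - q3x t\<bar> = 27/10 - u" "\<bar>q2x t - q3x t\<bar> = 27/10 + u"
    using q u by (simp_all add: q3x_def)
  moreover have "1 / (27/10 - u) + 1 / (27/10 + u) \<le> 20/27 + 8000/78057 * t powr (4/3)"
  proof -
    have "1 / (27/10 - u) + 1 / (27/10 + u) \<le> 2 / (27/10) + 2 * u^2 / (27/10 * ((27/10)^2 - (1/4)^2))"
      by (rule inverse_add_inverse_le_chord) (use u in auto)
    also have "u^2 = t powr (4/3)"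
      by (simp add: u_def power2_eq_square powr_add[symmetric])
    finally show ?thesis by (simp add: power2_eq_square)
  qed
  ultimately show ?thesis
    unfolding qhat_lagr_def by simp
qed

lemma qhat_lagr_initial_integral:
  shows "qhat_lagr integrable_on {0..1/8}"
    and "integral {0..1/8} qhat_lagr \<le> 17/12 + 5/54 + 125/364266"
proof -
  let ?g = "\<lambda>t::real. 17/18 * t powr (-2/3) + 20/27 + 8000/78057 * t powr (4/3)"
  have "((\<lambda>t::real. 17/18 * t powr (-2/3)) has_integral 17/12) {0..1/8}"
    using has_integral_mult_right[OF has_integral_powr_from_0[of "-2/3" "1/8"], of "17/18"]
    by (simp add: one_eighth_powr)
  moreover have "((\<lambda>t. 20/27) has_integral (5/54::real)) {0..1/8::real}"
    using has_integral_const_real[of "20/27::real" 0 "1/8"] by simp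
  moreover have "((\<lambda>t::real. 8000/78057 * t powr (4/3)) has_integral 125/364266) {0..1/8}"
    using has_integral_mult_right[OF has_integral_powr_from_0[of "4/3" "1/8"], of "8000/78057"]
    by (simp add: one_eighth_powr)
  ultimately have g: "(?g has_integral 17/12 + 5/54 + 125/364266) {0..1/8}"
    by (intro has_integral_add)
  have "qhat_lagr \<in> borel_measurable (lebesgue_on {0..1/8})"
    using qhat_lagr_measurable by (intro measurable_restrict_space1 measurable_completion) simp
  then show int: "qhat_lagr integrable_on {0..1/8}"
    by (rule measurable_bounded_by_integrable_imp_integrable_real[where g="?g"])
       (use g qhat_lagr_le_initial qhat_lagr_nonneg in auto)
  show "integral {0..1/8} qhat_lagr \<le> 17/12 + 5/54 + 125/364266"
    using integral_le[OF int has_integral_integrable[OF g]] integral_unique[OF g]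
      qhat_lagr_le_initial by auto
qed

lemma qhat_lagr_tail_integral:
  "(qhat_lagr has_integral 169/350 + 35/52 * ln (18/5) + 35/13 * ln (7/6) + 35/26 * ln (72/59)) {1/8..1}"
proof -
  define F where "F t = (26/35)^2 * t + 35/52 * ln (52*t + 11) - 35/26 * ln (89 - 26*t)
    + 35/26 * ln (100 + 26*t)" for t :: real
  have "(qhat_lagr has_integral F 1 - F (1/8)) {1/8..1}"
  proof (rule fundamental_theorem_of_calculus_interior)
    show "continuous_on {1/8..1} F"
      unfolding F_def by (intro continuous_intros) auto
    fix t :: real
    assume t: "t \<in> {1/8<..<1}"
    have "((\<lambda>t. (26/35)^2 * t) has_real_derivative (26/35)^2) (at t)"
      "((\<lambda>t. 35/52 * ln (52*t + 11)) has_real_derivative 35/(52*t + 11)) (at t)"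
      "((\<lambda>t. 35/26 * ln (89 - 26*t)) has_real_derivative - 35/(89 - 26*t)) (at t)"
      "((\<lambda>t. 35/26 * ln (100 + 26*t)) has_real_derivative 35/(100 + 26*t)) (at t)"
      using t by (auto intro!: derivative_eq_intros simp: field_simps)
    then have "(F has_real_derivative
        (26/35)^2 + 35/(52*t + 11) - - 35/(89 - 26*t) + 35/(100 + 26*t)) (at t)"
      unfolding F_def[abs_def] by (intro DERIV_add DERIV_diff)
    moreover have "(qhat_speed t)^2 = (26/35)^2" "1 / \<bar>q1x t - q2x t\<bar> = 35/(52*t + 11)"
      "1 / \<bar>q1x t - q3x t\<bar> = 35/(89 - 26*t)" "1 / \<bar>q2x t - q3x t\<bar> = 35/(100 + 26*t)"
      using t by (simp_all add: qhat_speed_def q1x_def q2x_def q3x_def field_simps)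
    ultimately show "(F has_vector_derivative qhat_lagr t) (at t)"
      by (simp add: qhat_lagr_def has_real_derivative_iff_has_vector_derivative)
  qed simp
  moreover have "F 1 - F (1/8) = 169/350 + 35/52 * ln (18/5) + 35/13 * ln (7/6) + 35/26 * ln (72/59)"
  proof -
    have "ln (18/5::real) = ln 63 - ln (35/2)"
      using ln_divide_pos[of 63 "35/2"] by simp
    moreover have "2 * ln (7/6::real) = ln (343/4) - ln 63"
      using ln_realpow[of "7/6::real" 2] ln_divide_pos[of "343/4" 63] by (simp add: power_divide)
    moreover have "ln (72/59::real) = ln 126 - ln (413/4)"
      using ln_divide_pos[of 126 "413/4"] by simp
    ultimately show ?thesis
      unfolding F_def by (simp add: power_divide field_simps)
  qed
  ultimately show ?thesis by simp
qed

lemma qhat_lagr_integral: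
  shows "set_integrable lborel {0..1} qhat_lagr"
    and "(LINT t:{0..1}|lborel. qhat_lagr t) < 3.5383"
proof -
  let ?tail = "169/350 + 35/52 * ln (18/5) + 35/13 * ln (7/6) + 35/26 * ln (72/59::real)"
  have whole: "(qhat_lagr has_integral integral {0..1/8} qhat_lagr + ?tail) {0..1}"
    by (rule has_integral_combine[OF _ _ integrable_integral qhat_lagr_tail_integral])
       (use qhat_lagr_initial_integral(1) in auto)
  then have int: "qhat_lagr integrable_on {0..1}"
    by blast
  have "integral {0..1} qhat_lagr = integral {0..1/8} qhat_lagr + ?tail"
    using whole by (rule integral_unique)
  moreover have "ln (18/5::real) \<le> 1281/1000" "ln (7/6::real) \<le> 1542/10000" "ln (72/59::real) \<le> 1993/10000"
    by (rule ln_le_if_le_exp_partial_sum[where N=10] ln_le_if_le_exp_partial_sum[where N=5];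
        simp add: lessThan_nat_numeral fact_numeral power_numeral_reduce)+
  ultimately have "integral {0..1} qhat_lagr < 3.5383"
    using qhat_lagr_initial_integral(2) by simp
  moreover have "set_integrable lborel {0..1} qhat_lagr" "(LINT t:{0..1}|lborel. qhat_lagr t) = integral {0..1} qhat_lagr"
    using set_integrable_lborel_if_nonneg_integrable_on[OF int qhat_lagr_nonneg qhat_lagr_measurable] by auto
  ultimately show "set_integrable lborel {0..1} qhat_lagr" "(LINT t:{0..1}|lborel. qhat_lagr t) < 3.5383"
    by simp_all
qed

lemma qhat_H1: "H1_on 0 1 chi qhat"
  unfolding H1_on_def
proof (intro conjI ballI exI[of _ "\<lambda>t. qhat_speed t *\<^sub>R qhat_dir"])
  have speed_measurable: "qhat_speed \<in> borel_measurable borel"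
    unfolding qhat_speed_def by measurable
  have speed: "set_integrable lborel {0..t} qhat_speed" "(LINT s:{0..t}|lborel. qhat_speed s) = qhat_shift t"
    if "0 \<le> t" "t \<le> 1" for t
    using set_integrable_lborel_if_nonneg_integrable_on[OF _ _ speed_measurable, of "{0..t}"]
      qhat_speed_has_integral[OF that]
    by (auto simp: qhat_speed_def integral_unique)
  show "qhat t \<in> chi" for t
    by (rule qhat_in_chi)
  show "set_integrable lborel {0..1} (\<lambda>t. qhat_speed t *\<^sub>R qhat_dir)"
    using speed(1)[of 1] by auto
  have "(norm qhat_dir)^2 = 2"
    by (simp add: qhat_dir_def norm_vec_def L2_set_def sum_3 sum_2)
  then have "(norm (qhat_speed t *\<^sub>R qhat_dir))^2 = 2 * (qhat_speed t)^2" for t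
    by (simp add: power_mult_distrib)
  moreover have "(qhat_speed t)^2 \<le> qhat_lagr t" for t
    by (simp add: qhat_lagr_def)
  ultimately have kinetic_le: "norm ((norm (qhat_speed t *\<^sub>R qhat_dir))^2) \<le> norm (2 * qhat_lagr t)" for t
    using qhat_lagr_nonneg[of t] by simp
  show "set_integrable lborel {0..1} (\<lambda>t. (norm (qhat_speed t *\<^sub>R qhat_dir))^2)"
  proof (rule set_integrable_bound[where f="\<lambda>t. 2 * qhat_lagr t"])
    show "set_integrable lborel {0..1} (\<lambda>t. 2 * qhat_lagr t)"
      using qhat_lagr_integral(1) by (rule set_integrable_mult_right)
    show "set_borel_measurable lborel {0..1} (\<lambda>t. (norm (qhat_speed t *\<^sub>R qhat_dir))^2)"
      unfolding set_borel_measurable_def using speed_measurable by measurable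
  qed (use kinetic_le in auto)
  fix t :: real
  assume t: "t \<in> {0..1}"
  have "(LINT s:{0..t}|lborel. qhat_speed s *\<^sub>R qhat_dir) = qhat_shift t *\<^sub>R qhat_dir"
    using t speed[of t] by (simp add: set_integral_scaleR_left_if_set_integrable)
  then show "qhat t = qhat 0 + (LINT s:{0..t}|lborel. qhat_speed s *\<^sub>R qhat_dir)"
    by (simp add: qhat_eq_shift[of t])
qed

theorem lemma3p1:
  shows "H1_on 0 1 chi qhat \<and> set_integrable lborel {0..1} (lagrangian qhat)
         \<and> action qhat < 3.5383"
proof -
  have off_corners: "indicator {0..1} t *\<^sub>R lagrangian qhat t = indicator {0..1} t *\<^sub>R qhat_lagr t"
    if "t \<notin> {0, 1/8}" for t :: real
    using that lagrangian_qhat[of t] by (auto simp: indicator_def)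
  have "set_integrable lborel {0..1} (lagrangian qhat) \<longleftrightarrow> set_integrable lborel {0..1} qhat_lagr"
    unfolding set_integrable_def
    by (rule integrable_discrete_difference[where X="{0, 1/8}"]) (use off_corners in auto)
  moreover have "action qhat = (LINT t:{0..1}|lborel. qhat_lagr t)"
    unfolding action_def set_lebesgue_integral_def
    by (rule integral_discrete_difference[where X="{0, 1/8}"]) (use off_corners in auto)
  ultimately show ?thesis
    using qhat_H1 qhat_lagr_integral by simp
qed

end
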